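(* Every integer $n\geq 3$ with $n\neq 5$ and $n\not\equiv 0\pmod 4$ can be written as a sum of four squares of coprime integers, at most one of which is zero. *)

theory Defs
  imports Main
begin

end

theory Submission
  imports Defs "HOL-Number_Theory.Number_Theory"
begin

(*
  Suppose x^2 + y^2 + 1 = 0 (mod n). The integer quaternions (a, b, c, d) with
  a = x c + y d and b = y c - x d (mod n) form a lattice L that is closed under right
  multiplication and whose norms are all divisible by n. Division with remainder by an
  element q of least norm M in L shows that M divides every norm in L: round q^* v / M to
  the nearest integer quaternion; a remainder of norm M forces every coordinate of q^* v
  to be an odd multiple of M/2, and then M divides N(v) anyway. Testing this on
  (n,0,0,0), (x,y,1,0), (x+n,y,1,0) and (x,y+n,1,0) gives M = n. A vector of norm n in L
  is primitive, because dividing it by a common factor g gives a vector of norm n/g^2 in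
  the corresponding lattice for n/g. If moreover y is a unit and x is nonzero modulo n,
  the congruences defining L leave no room for two vanishing coordinates.
  Such x and y exist for every n > 0 with 4 not dividing n, except n = 1, 2, 5, 10: for
  primes by counting squares, along odd prime powers by Hensel lifting, and for coprime
  factors by the Chinese remainder theorem. The remaining case is 10 = 2^2+2^2+1^2+1^2.
*)

section \<open>Integer quaternions\<close>

type_synonym quat = "int \<times> int \<times> int \<times> int"

fun quat_mult :: "quat \<Rightarrow> quat \<Rightarrow> quat" where
  "quat_mult (a, b, c, d) (e, f, g, h) =
     (a*e - b*f - c*g - d*h, a*f + b*e + c*h - d*g, a*g - b*h + c*e + d*f, a*h + b*g - c*f + d*e)"

fun quat_cnj :: "quat \<Rightarrow> quat" where
  "quat_cnj (a, b, c, d) = (a, -b, -c, -d)"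

fun quat_diff :: "quat \<Rightarrow> quat \<Rightarrow> quat" where
  "quat_diff (a, b, c, d) (e, f, g, h) = (a - e, b - f, c - g, d - h)"

fun quat_scale :: "int \<Rightarrow> quat \<Rightarrow> quat" where
  "quat_scale k (a, b, c, d) = (k*a, k*b, k*c, k*d)"

fun quat_norm :: "quat \<Rightarrow> int" where
  "quat_norm (a, b, c, d) = a^2 + b^2 + c^2 + d^2"

lemma quat_norm_mult: "quat_norm (quat_mult p q) = quat_norm p * quat_norm q"
  by (cases p; cases q) (simp add: power2_eq_square algebra_simps)

lemma quat_norm_cnj: "quat_norm (quat_cnj q) = quat_norm q"
  by (cases q) simp

lemma quat_norm_nonneg: "quat_norm q \<ge> 0"
  by (cases q) simp

lemma quat_norm_pos: "q \<noteq> (0, 0, 0, 0) \<Longrightarrow> quat_norm q > 0"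
  by (cases q) (auto simp: add_pos_nonneg add_nonneg_pos)

lemma quat_diff_eq_0_iff: "quat_diff v w = (0, 0, 0, 0) \<longleftrightarrow> v = w"
  by (cases v; cases w) simp

lemma quat_cnj_mult_diff_mult:
  "quat_mult (quat_cnj q) (quat_diff v (quat_mult q w)) =
     quat_diff (quat_mult (quat_cnj q) v) (quat_scale (quat_norm q) w)"
  by (cases q; cases v; cases w) (simp add: power2_eq_square algebra_simps)

lemma round_to_multiple:
  fixes M p :: int
  assumes "M > 0"
  obtains a where "(2*(p - M*a))^2 \<le> M^2" and "(2*(p - M*a))^2 = M^2 \<Longrightarrow> 2*p = M*(2*a - 1)"
proof
  define a where "a = (2*p + M) div (2*M)"
  define \<rho> where "\<rho> = (2*p + M) mod (2*M)"
  have r: "2*(p - M*a) = \<rho> - M"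
    unfolding a_def \<rho>_def by (simp add: algebra_simps minus_div_mult_eq_mod[symmetric])
  have "0 \<le> \<rho>" "\<rho> < 2*M"
    unfolding \<rho>_def using assms by simp_all
  then have "\<bar>2*(p - M*a)\<bar> \<le> \<bar>M\<bar>" using r by simp
  then show "(2*(p - M*a))^2 \<le> M^2" by (simp only: abs_le_square_iff)
  assume "(2*(p - M*a))^2 = M^2"
  then have "\<rho> - M = M \<or> \<rho> - M = - M" unfolding r by (simp add: power2_eq_iff)
  then show "2*p = M*(2*a - 1)" using r \<open>\<rho> < 2*M\<close> by (auto simp: algebra_simps)
qed

lemma quat_round_to_multiple:
  fixes M :: int and P :: quat
  assumes "M > 0"
  obtains w where "quat_norm (quat_diff P (quat_scale M w)) \<le> M^2"
    and "quat_norm (quat_diff P (quat_scale M w)) = M^2 \<Longrightarrow> M^2 dvd quat_norm P"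
proof -
  obtain p1 p2 p3 p4 where P: "P = (p1, p2, p3, p4)" by (cases P)
  obtain a1 where a1: "(2*(p1 - M*a1))^2 \<le> M^2" "(2*(p1 - M*a1))^2 = M^2 \<Longrightarrow> 2*p1 = M*(2*a1 - 1)"
    using round_to_multiple[OF assms, of p1] by blast
  obtain a2 where a2: "(2*(p2 - M*a2))^2 \<le> M^2" "(2*(p2 - M*a2))^2 = M^2 \<Longrightarrow> 2*p2 = M*(2*a2 - 1)"
    using round_to_multiple[OF assms, of p2] by blast
  obtain a3 where a3: "(2*(p3 - M*a3))^2 \<le> M^2" "(2*(p3 - M*a3))^2 = M^2 \<Longrightarrow> 2*p3 = M*(2*a3 - 1)"
    using round_to_multiple[OF assms, of p3] by blast
  obtain a4 where a4: "(2*(p4 - M*a4))^2 \<le> M^2" "(2*(p4 - M*a4))^2 = M^2 \<Longrightarrow> 2*p4 = M*(2*a4 - 1)"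
    using round_to_multiple[OF assms, of p4] by blast
  let ?R = "quat_diff P (quat_scale M (a1, a2, a3, a4))"
  have four_R: "4 * quat_norm ?R =
      (2*(p1 - M*a1))^2 + (2*(p2 - M*a2))^2 + (2*(p3 - M*a3))^2 + (2*(p4 - M*a4))^2"
    unfolding P by (simp add: power2_eq_square algebra_simps)
  show thesis
  proof
    show "quat_norm ?R \<le> M^2" using four_R a1(1) a2(1) a3(1) a4(1) by linarith
  next
    assume "quat_norm ?R = M^2"
    then have e: "2*p1 = M*(2*a1 - 1)" "2*p2 = M*(2*a2 - 1)" "2*p3 = M*(2*a3 - 1)" "2*p4 = M*(2*a4 - 1)"
      using four_R a1 a2 a3 a4 by linarith+
    have "4 * quat_norm P = (2*p1)^2 + (2*p2)^2 + (2*p3)^2 + (2*p4)^2"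
      unfolding P by (simp add: power2_eq_square algebra_simps)
    also have "\<dots> = 4 * (M^2 * (1 + (a1^2 - a1) + (a2^2 - a2) + (a3^2 - a3) + (a4^2 - a4)))"
      unfolding e by (simp add: power2_eq_square algebra_simps)
    finally show "M^2 dvd quat_norm P" by simp
  qed
qed

lemma min_norm_dvd_norm:
  assumes diff_closed: "\<And>v w. v \<in> I \<Longrightarrow> w \<in> I \<Longrightarrow> quat_diff v w \<in> I"
    and mult_closed: "\<And>v w. v \<in> I \<Longrightarrow> quat_mult v w \<in> I"
    and q: "q \<in> I" "q \<noteq> (0, 0, 0, 0)"
    and minimal: "\<And>w. w \<in> I \<Longrightarrow> w \<noteq> (0, 0, 0, 0) \<Longrightarrow> quat_norm q \<le> quat_norm w"
    and v: "v \<in> I"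
  shows "quat_norm q dvd quat_norm v"
proof -
  define M where "M = quat_norm q"
  have M: "M > 0" unfolding M_def using quat_norm_pos[OF q(2)] .
  obtain w where w: "quat_norm (quat_diff (quat_mult (quat_cnj q) v) (quat_scale M w)) \<le> M^2"
    "quat_norm (quat_diff (quat_mult (quat_cnj q) v) (quat_scale M w)) = M^2
       \<Longrightarrow> M^2 dvd quat_norm (quat_mult (quat_cnj q) v)"
    using quat_round_to_multiple[OF M] by blast
  define r where "r = quat_diff v (quat_mult q w)"
  have r: "r \<in> I" unfolding r_def using v q(1) by (intro diff_closed mult_closed)
  have norm_r: "M * quat_norm r = quat_norm (quat_diff (quat_mult (quat_cnj q) v) (quat_scale M w))"
    unfolding r_def M_def by (simp only: quat_cnj_mult_diff_mult[symmetric] quat_norm_mult quat_norm_cnj)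
  show ?thesis
  proof (cases "r = (0, 0, 0, 0)")
    case True
    then have "v = quat_mult q w" unfolding r_def quat_diff_eq_0_iff .
    then show ?thesis by (simp add: quat_norm_mult)
  next
    case False
    have "M * quat_norm r \<le> M * M" using norm_r w(1) by (simp add: power2_eq_square)
    then have "quat_norm r \<le> M" using M by simp
    moreover have "M \<le> quat_norm r" unfolding M_def using minimal[OF r False] .
    ultimately have "M^2 dvd M * quat_norm v"
      using norm_r w(2) by (simp add: power2_eq_square quat_norm_mult quat_norm_cnj M_def)
    then show ?thesis using M unfolding M_def by (simp add: power2_eq_square)
  qed
qed

section \<open>A lattice of quaternions with norms divisible by n\<close>

lemma square_mod_4: "(x::int)^2 mod 4 \<in> {0, 1}"
proof (cases "even x")
  case True
  then obtain a where "x = 2*a" ..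
  then show ?thesis by (simp add: power2_eq_square)
next
  case False
  then obtain a where "x = 2*a + 1" by (rule oddE)
  then have "x^2 = 1 + 4*(a^2 + a)" by (simp add: power2_eq_square algebra_simps)
  then show ?thesis by (simp only: mod_mult_self2) simp
qed

lemma not_four_dvd_sum_squares_plus_one: "\<not> 4 dvd x^2 + y^2 + (1::int)"
proof -
  have "x^2 + y^2 + 1 = 4 * (x^2 div 4 + y^2 div 4) + (x^2 mod 4 + y^2 mod 4 + 1)"
    by simp
  then show ?thesis using square_mod_4[of x] square_mod_4[of y] by auto presburger+
qed

lemma prime_dvd_two_iff:
  fixes p :: int
  assumes "prime p"
  shows "p dvd 2 \<longleftrightarrow> p = 2"
  using assms by (auto intro: primes_dvd_imp_eq)

lemma is_unit_if_dvd_sum_squares_plus_one: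
  fixes k x y :: int
  assumes "k dvd 2*x" "k dvd 2*y" "k^2 dvd x^2 + y^2 + 1"
  shows "is_unit k"
proof (rule ccontr)
  assume "\<not> is_unit k"
  then obtain p where p: "prime p" "p dvd k" using prime_factor_int[of k] by (auto simp: zdvd1_eq)
  have p_sq: "p^2 dvd x^2 + y^2 + 1" using p(2) assms(3) by (blast intro: dvd_trans dvd_power_same)
  show False
  proof (cases "p = 2")
    case True
    then show False using p_sq not_four_dvd_sum_squares_plus_one by simp
  next
    case False
    have "\<not> p dvd 2" using False p(1) by (simp add: prime_dvd_two_iff)
    moreover have "p dvd 2*x" "p dvd 2*y" using p(2) assms(1,2) by (blast intro: dvd_trans)+
    ultimately have "p dvd x" "p dvd y" using p(1) by (simp_all add: prime_dvd_mult_iff)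
    then have "p dvd x^2 + y^2" by (simp add: power2_eq_square)
    moreover have "p dvd x^2 + y^2 + 1" using p_sq by (rule dvd_trans[rotated]) simp
    ultimately have "p dvd 1" by (simp add: dvd_add_right_iff)
    then show False using p(1) not_prime_unit by blast
  qed
qed

lemma dvd_square_le_imp_eq_0:
  fixes n t :: int
  assumes "n > 1" "n dvd t" "t^2 \<le> n"
  shows "t = 0"
proof (rule ccontr)
  assume "t \<noteq> 0"
  then have "\<bar>n\<bar> \<le> \<bar>t\<bar>" using assms(2) by (rule dvd_imp_le_int)
  then have "n^2 \<le> t^2" by (simp only: abs_le_square_iff)
  moreover have "n < n^2" using assms(1) by (simp add: power2_eq_square)
  ultimately show False using assms(3) by linarith
qed

text \<open>In coordinates, the right ideal (x + y i + j)\<bbbH> + n\<bbbH> of the Lipschitz quaternions \<bbbH>.\<close>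

definition quat_lattice :: "int \<Rightarrow> int \<Rightarrow> int \<Rightarrow> quat set" where
  "quat_lattice n x y = {(a, b, c, d). n dvd a - x*c - y*d \<and> n dvd b - y*c + x*d}"

lemma quat_latticeE:
  assumes "(a, b, c, d) \<in> quat_lattice n x y"
  obtains s t where "a = x*c + y*d + n*s" and "b = y*c - x*d + n*t"
proof -
  obtain s t where "a - x*c - y*d = n*s" "b - y*c + x*d = n*t"
    using assms unfolding quat_lattice_def by (auto elim!: dvdE)
  then show thesis by (intro that[of s t]) (simp_all add: algebra_simps)
qed

lemma quat_lattice_diff:
  "v \<in> quat_lattice n x y \<Longrightarrow> w \<in> quat_lattice n x y \<Longrightarrow> quat_diff v w \<in> quat_lattice n x y"
proof (cases v; cases w)
  fix a b c d e f g h
  assume "v \<in> quat_lattice n x y" "w \<in> quat_lattice n x y" "v = (a, b, c, d)" "w = (e, f, g, h)"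
  then have "n dvd (a - x*c - y*d) - (e - x*g - y*h)" "n dvd (b - y*c + x*d) - (f - y*g + x*h)"
    unfolding quat_lattice_def by auto
  then show ?thesis
    using \<open>v = _\<close> \<open>w = _\<close> unfolding quat_lattice_def by (simp add: algebra_simps)
qed

lemma quat_lattice_mult:
  assumes n: "n dvd x^2 + y^2 + 1" and v: "v \<in> quat_lattice n x y"
  shows "quat_mult v w \<in> quat_lattice n x y"
proof (cases v; cases w)
  fix a b c d e f g h
  assume vw: "v = (a, b, c, d)" "w = (e, f, g, h)"
  obtain s t where a: "a = x*c + y*d + n*s" and b: "b = y*c - x*d + n*t"
    using v unfolding vw by (rule quat_latticeE)
  have "(a*e - b*f - c*g - d*h) - x*(a*g - b*h + c*e + d*f) - y*(a*h + b*g - c*f + d*e)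
     = n * (e*s - f*t - g*(x*s + y*t) + h*(x*t - y*s)) - (x^2 + y^2 + 1)*(c*g + d*h)"
    "(a*f + b*e + c*h - d*g) - y*(a*g - b*h + c*e + d*f) + x*(a*h + b*g - c*f + d*e)
     = n * (e*t + f*s + g*(x*t - y*s) + h*(x*s + y*t)) + (x^2 + y^2 + 1)*(c*h - d*g)"
    unfolding a b by (simp_all add: algebra_simps power2_eq_square)
  then show ?thesis using n unfolding vw quat_lattice_def by simp
qed

lemma quat_lattice_norm_dvd:
  assumes n: "n dvd x^2 + y^2 + 1" and v: "v \<in> quat_lattice n x y"
  shows "n dvd quat_norm v"
proof (cases v)
  fix a b c d
  assume vw: "v = (a, b, c, d)"
  obtain s t where a: "a = x*c + y*d + n*s" and b: "b = y*c - x*d + n*t"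
    using v unfolding vw by (rule quat_latticeE)
  have "quat_norm v = (x^2 + y^2 + 1)*(c^2 + d^2) + n*(2*s*(x*c + y*d) + 2*t*(y*c - x*d) + n*(s^2 + t^2))"
    unfolding vw a b by (simp add: algebra_simps power2_eq_square)
  then show ?thesis using n by simp
qed

lemma quat_lattice_contains_norm:
  assumes n: "n > 0" "n dvd x^2 + y^2 + 1"
  obtains v where "v \<in> quat_lattice n x y" and "quat_norm v = n"
proof -
  let ?L = "quat_lattice n x y"
  have in_L: "(n, 0, 0, 0) \<in> ?L" "(x, y, 1, 0) \<in> ?L" "(x + n, y, 1, 0) \<in> ?L" "(x, y + n, 1, 0) \<in> ?L"
    unfolding quat_lattice_def by simp_all
  obtain q where q: "q \<in> ?L" "q \<noteq> (0, 0, 0, 0)"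
    and least: "\<And>w. w \<in> ?L \<and> w \<noteq> (0, 0, 0, 0) \<Longrightarrow> nat (quat_norm q) \<le> nat (quat_norm w)"
    using ex_has_least_nat[of "\<lambda>w. w \<in> ?L \<and> w \<noteq> (0, 0, 0, 0)" "(n, 0, 0, 0)" "\<lambda>w. nat (quat_norm w)"]
      in_L(1) n(1) by auto
  have dvd_norm: "quat_norm q dvd quat_norm v" if "v \<in> ?L" for v
  proof (rule min_norm_dvd_norm[of ?L])
    show "quat_norm q \<le> quat_norm w" if "w \<in> ?L" "w \<noteq> (0, 0, 0, 0)" for w
      using least[of w] that quat_norm_nonneg[of w] by simp
  qed (use q that quat_lattice_diff quat_lattice_mult[OF n(2)] in auto)
  have dvd: "quat_norm q dvd n * n" "quat_norm q dvd x^2 + y^2 + 1"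
    "quat_norm q dvd (x + n)^2 + y^2 + 1" "quat_norm q dvd x^2 + (y + n)^2 + 1"
    using dvd_norm[OF in_L(1)] dvd_norm[OF in_L(2)] dvd_norm[OF in_L(3)] dvd_norm[OF in_L(4)]
    by (simp_all add: power2_eq_square)
  obtain k where k: "quat_norm q = n * k" using quat_lattice_norm_dvd[OF n(2) q(1)] ..
  have "k dvd n" using dvd(1) n(1) unfolding k by simp
  have "n * k dvd n * (2*x + n)" "n * k dvd n * (2*y + n)"
    using dvd_diff[OF dvd(3) dvd(2)] dvd_diff[OF dvd(4) dvd(2)] unfolding k
    by (simp_all add: power2_eq_square algebra_simps)
  then have "k dvd 2*x" "k dvd 2*y" using \<open>k dvd n\<close> n(1) by (simp_all add: dvd_add_left_iff)
  moreover have "k^2 dvd x^2 + y^2 + 1"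
    using dvd(2) \<open>k dvd n\<close> unfolding k power2_eq_square by (meson dvd_trans mult_dvd_mono dvd_refl)
  ultimately have "is_unit k" by (rule is_unit_if_dvd_sum_squares_plus_one)
  moreover have "k > 0" using quat_norm_pos[OF q(2)] n(1) unfolding k by (simp add: zero_less_mult_iff)
  ultimately have "quat_norm q = n" unfolding k by simp
  with q(1) show thesis by (rule that)
qed

lemma quat_lattice_norm_eq_coprime:
  assumes n: "n > 0" "n dvd x^2 + y^2 + 1"
    and v: "(a, b, c, d) \<in> quat_lattice n x y" and norm: "quat_norm (a, b, c, d) = n"
  shows "gcd (gcd a b) (gcd c d) = 1"
proof -
  define g where "g = gcd (gcd a b) (gcd c d)"
  have "g dvd a" "g dvd b" "g dvd c" "g dvd d"
    unfolding g_def by (meson dvd_trans gcd_dvd1 gcd_dvd2)+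
  then obtain a' b' c' d' where abcd: "a = g*a'" "b = g*b'" "c = g*c'" "d = g*d'"
    by (auto elim!: dvdE)
  define m where "m = quat_norm (a', b', c', d')"
  have n_eq: "n = g * (g * m)"
    using norm unfolding abcd m_def by (simp add: power2_eq_square algebra_simps)
  have "g \<noteq> 0" using n(1) n_eq by auto
  then have g: "g > 0" unfolding g_def by (simp add: order_le_neq_trans)
  have "m > 0" using n(1) g unfolding n_eq by (simp add: zero_less_mult_iff)
  have "g * (g * m) dvd g * (a' - x*c' - y*d')" "g * (g * m) dvd g * (b' - y*c' + x*d')"
    using v unfolding quat_lattice_def abcd n_eq by (simp_all add: algebra_simps)
  then have "(a', b', c', d') \<in> quat_lattice (g * m) x y"
    using g unfolding quat_lattice_def by simp
  moreover have "g * m dvd x^2 + y^2 + 1" using n(2) unfolding n_eq by (rule dvd_mult_right)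
  ultimately have "g * m dvd m" unfolding m_def by (rule quat_lattice_norm_dvd[rotated])
  then have "g * m \<le> 1 * m" using \<open>m > 0\<close> by (simp add: zdvd_imp_le)
  then have "g \<le> 1" using \<open>m > 0\<close> by (rule mult_right_le_imp_le)
  then show ?thesis using g unfolding g_def[symmetric] by simp
qed

lemma quat_lattice_zero_pair_dvd:
  assumes n: "n dvd x^2 + y^2 + 1" and y: "coprime y n" and v: "(a, b, c, d) \<in> quat_lattice n x y"
  shows "c = 0 \<and> d = 0 \<Longrightarrow> n dvd a \<and> n dvd b"
    and "a = 0 \<and> b = 0 \<Longrightarrow> n dvd c \<and> n dvd d"
    and "a = 0 \<and> c = 0 \<Longrightarrow> n dvd b \<and> n dvd d"
    and "b = 0 \<and> d = 0 \<Longrightarrow> n dvd a \<and> n dvd c"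
proof -
  have A: "n dvd a - x*c - y*d" and B: "n dvd b - y*c + x*d"
    using v unfolding quat_lattice_def by simp_all
  show "c = 0 \<and> d = 0 \<Longrightarrow> n dvd a \<and> n dvd b" using A B by simp
  show "n dvd b \<and> n dvd d" if ac: "a = 0 \<and> c = 0"
  proof -
    have "n dvd d" using A y ac by (simp add: coprime_commute coprime_dvd_mult_right_iff)
    moreover have "n dvd (b + x*d) - x*d" using B ac \<open>n dvd d\<close> by (intro dvd_diff) simp_all
    ultimately show ?thesis by simp
  qed
  show "n dvd a \<and> n dvd c" if bd: "b = 0 \<and> d = 0"
  proof -
    have "n dvd c" using B y bd by (simp add: coprime_commute coprime_dvd_mult_right_iff)
    moreover have "n dvd (a - x*c) + x*c" using A bd \<open>n dvd c\<close> by (intro dvd_add) simp_all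
    ultimately show ?thesis by simp
  qed
  assume "a = 0 \<and> b = 0"
  then have u: "n dvd x*c + y*d" and w: "n dvd y*c - x*d"
    using dvd_minus_iff[THEN iffD2, OF A] dvd_minus_iff[THEN iffD2, OF B] by (simp_all add: algebra_simps)
  have "c = (x^2 + y^2 + 1)*c - x*(x*c + y*d) - y*(y*c - x*d)"
    "d = (x^2 + y^2 + 1)*d - y*(x*c + y*d) + x*(y*c - x*d)"
    by (simp_all add: algebra_simps power2_eq_square)
  moreover have "n dvd (x^2 + y^2 + 1)*c - x*(x*c + y*d) - y*(y*c - x*d)"
    "n dvd (x^2 + y^2 + 1)*d - y*(x*c + y*d) + x*(y*c - x*d)"
    using dvd_mult2[OF n] dvd_mult[OF u] dvd_mult[OF w] by (blast intro: dvd_add dvd_diff)+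
  ultimately show "n dvd c \<and> n dvd d" by simp
qed

lemma quat_lattice_zero_cross_pair_dvd:
  assumes v: "(a, b, c, d) \<in> quat_lattice n x y" and coprime: "gcd (gcd a b) (gcd c d) = 1"
  shows "a = 0 \<and> d = 0 \<Longrightarrow> n dvd x"
    and "b = 0 \<and> c = 0 \<Longrightarrow> n dvd x"
proof -
  have A: "n dvd a - x*c - y*d" and B: "n dvd b - y*c + x*d"
    using v unfolding quat_lattice_def by simp_all
  show "n dvd x" if ad: "a = 0 \<and> d = 0"
  proof -
    have "coprime n c"
    proof (rule coprimeI)
      fix e assume e: "e dvd n" "e dvd c"
      have "n dvd b - y*c" using B ad by simp
      with e have "e dvd (b - y*c) + y*c" by (blast intro: dvd_add dvd_mult dvd_trans[OF e(1)])
      then have "e dvd gcd (gcd a b) (gcd c d)" using ad e(2) by simp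
      then show "is_unit e" using coprime by simp
    qed
    then show ?thesis using A ad by (simp add: coprime_dvd_mult_left_iff)
  qed
  show "n dvd x" if bc: "b = 0 \<and> c = 0"
  proof -
    have "coprime n d"
    proof (rule coprimeI)
      fix e assume e: "e dvd n" "e dvd d"
      have "n dvd a - y*d" using A bc by simp
      with e have "e dvd (a - y*d) + y*d" by (blast intro: dvd_add dvd_mult dvd_trans[OF e(1)])
      then have "e dvd gcd (gcd a b) (gcd c d)" using bc e(2) by simp
      then show "is_unit e" using coprime by simp
    qed
    then show ?thesis using B bc by (simp add: coprime_dvd_mult_left_iff)
  qed
qed

lemma quat_lattice_norm_eq_at_most_one_zero:
  assumes n: "n > 1" "n dvd x^2 + y^2 + 1" and y: "coprime y n" and x: "\<not> n dvd x"
    and v: "(a, b, c, d) \<in> quat_lattice n x y" and norm: "quat_norm (a, b, c, d) = n"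
  shows "length (filter (\<lambda>z. z = 0) [a, b, c, d]) \<le> 1"
proof -
  have "a^2 \<le> n" "b^2 \<le> n" "c^2 \<le> n" "d^2 \<le> n"
    using norm zero_le_power2[of a] zero_le_power2[of b] zero_le_power2[of c] zero_le_power2[of d]
    unfolding quat_norm.simps by linarith+
  then have small: "n dvd a \<Longrightarrow> a = 0" "n dvd b \<Longrightarrow> b = 0" "n dvd c \<Longrightarrow> c = 0" "n dvd d \<Longrightarrow> d = 0"
    using dvd_square_le_imp_eq_0[OF n(1)] by blast+
  have nonzero: "\<not> (a = 0 \<and> b = 0 \<and> c = 0 \<and> d = 0)" using norm n(1) by auto
  have "gcd (gcd a b) (gcd c d) = 1"
    using quat_lattice_norm_eq_coprime[OF _ n(2) v norm] n(1) by simp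
  note cross = quat_lattice_zero_cross_pair_dvd[OF v this]
  note pair = quat_lattice_zero_pair_dvd[OF n(2) y v]
  have "\<not> (c = 0 \<and> d = 0)" "\<not> (a = 0 \<and> b = 0)" "\<not> (a = 0 \<and> c = 0)" "\<not> (b = 0 \<and> d = 0)"
    using pair small nonzero by blast+
  moreover have "\<not> (a = 0 \<and> d = 0)" "\<not> (b = 0 \<and> c = 0)"
    using cross x by blast+
  ultimately show ?thesis by auto
qed

section \<open>Solving x^2 + y^2 + 1 = 0 modulo n\<close>

text \<open>The coprimality of y and the condition on x in a strong root are what exclude two
  vanishing coordinates in \<open>quat_lattice_norm_eq_at_most_one_zero\<close>.\<close>

definition has_root :: "int \<Rightarrow> bool" where
  "has_root n \<longleftrightarrow> (\<exists>x y. n dvd x^2 + y^2 + 1 \<and> coprime y n)"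

definition has_strong_root :: "int \<Rightarrow> bool" where
  "has_strong_root n \<longleftrightarrow> (\<exists>x y. n dvd x^2 + y^2 + 1 \<and> coprime y n \<and> \<not> n dvd x)"

lemma has_strong_root_imp_has_root: "has_strong_root n \<Longrightarrow> has_root n"
  unfolding has_root_def has_strong_root_def by blast

lemma dvd_abs_less_imp_eq_0:
  fixes p z :: int
  assumes "p dvd z" "\<bar>z\<bar> < \<bar>p\<bar>"
  shows "z = 0"
  using assms by (metis dvd_imp_le_int not_le)

lemma square_cong_imp_eq:
  fixes p x x' :: int
  assumes p: "prime p" and x: "0 \<le> x" "2*x < p" and x': "0 \<le> x'" "2*x' < p"
    and cong: "[x^2 = x'^2] (mod p)"
  shows "x = x'"
proof -
  have "p dvd (x - x') * (x + x')"
    using cong unfolding cong_iff_dvd_diff by (simp add: algebra_simps power2_eq_square)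
  then consider "p dvd x - x'" | "p dvd x + x'" using p by (auto simp: prime_dvd_mult_iff)
  then show ?thesis
  proof cases
    case 1
    then have "x - x' = 0" using x x' by (intro dvd_abs_less_imp_eq_0[of p]) auto
    then show ?thesis by simp
  next
    case 2
    then have "x + x' = 0" using x x' by (intro dvd_abs_less_imp_eq_0[of p]) auto
    then show ?thesis using x x' by simp
  qed
qed

lemma prime_dvd_sum_squares_plus_one:
  fixes p :: int
  assumes p: "prime p"
  obtains x y where "p dvd x^2 + y^2 + 1"
proof (cases "p = 2")
  case True
  then show thesis using that[of 1 0] by simp
next
  case False
  then have "odd p" using p prime_ge_2_int[OF p] prime_odd_int[OF p] by simp
  define h where "h = (p - 1) div 2"
  have p_eq: "p = 2*h + 1" unfolding h_def using \<open>odd p\<close> by (auto elim!: oddE)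
  define f where "f x = x^2 mod p" for x :: int
  define g where "g y = (- 1 - y^2) mod p" for y :: int
  have range: "z mod p \<in> {0..p - 1}" for z
    using prime_gt_0_int[OF p] pos_mod_sign[of p z] pos_mod_bound[of p z] by simp
  have "inj_on f {0..h}"
    by (rule inj_onI) (auto simp: f_def p_eq cong_def intro!: square_cong_imp_eq[OF p])
  moreover have "inj_on g {0..h}"
    by (rule inj_onI) (auto simp: g_def p_eq cong_def mod_eq_dvd_iff dvd_diff_commute intro!: square_cong_imp_eq[OF p])
  moreover have "f ` {0..h} \<union> g ` {0..h} \<subseteq> {0..p - 1}"
    unfolding f_def g_def using range by auto
  ultimately have "f ` {0..h} \<inter> g ` {0..h} \<noteq> {}"
    using card_mono[of "{0..p - 1}" "f ` {0..h} \<union> g ` {0..h}"] card_Un_disjoint[of "f ` {0..h}" "g ` {0..h}"]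
      p_eq prime_ge_2_int[OF p] by (auto simp: card_image)
  then obtain x y where "f x = g y" by blast
  then have "[x^2 = - 1 - y^2] (mod p)" unfolding f_def g_def cong_def .
  then have "p dvd x^2 + y^2 + 1" unfolding cong_iff_dvd_diff by (simp add: algebra_simps)
  then show thesis by (rule that)
qed

lemma prime_dvd_sum_squares_plus_one_coprime:
  fixes p :: int
  assumes p: "prime p"
  obtains x y where "p dvd x^2 + y^2 + 1" and "\<not> p dvd y"
proof -
  obtain x y where root: "p dvd x^2 + y^2 + 1" using prime_dvd_sum_squares_plus_one[OF p] .
  have "\<not> (p dvd x \<and> p dvd y)"
  proof
    assume "p dvd x \<and> p dvd y"
    then have "p dvd x^2 + y^2" by (simp add: power2_eq_square)
    then have "p dvd 1" using root by (simp add: dvd_add_right_iff)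
    then show False using p not_prime_unit by blast
  qed
  then show thesis using root that[of x y] that[of y x] by (auto simp: add.commute)
qed

lemma has_root_prime:
  assumes "prime p" shows "has_root p"
proof -
  obtain x y where "p dvd x^2 + y^2 + 1" "\<not> p dvd y"
    using prime_dvd_sum_squares_plus_one_coprime[OF assms] .
  moreover from \<open>\<not> p dvd y\<close> have "coprime y p" using assms by (simp add: prime_imp_coprime coprime_commute)
  ultimately show ?thesis unfolding has_root_def by blast
qed

lemma has_strong_root_prime_if_sqrt_minus_one:
  fixes p z :: int
  assumes p: "prime p" "p > 5" and z: "p dvd z^2 + 1"
  shows "has_strong_root p"
proof -
  have "\<not> p dvd 3" "\<not> p dvd 4" "\<not> p dvd 5" using p(2) by (simp_all add: zdvd_not_zless)
  then have "coprime 5 p" using p(1) by (simp add: prime_imp_coprime coprime_commute)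
  then obtain w where w: "[5*w = 1] (mod p)" using cong_solve_coprime_int by blast
  \<comment> \<open>(3/5)^2 + (4/5)^2 = 1 turns the root (z, 0) into one with nonzero coordinates.\<close>
  define x where "x = 3*z*w"
  define y where "y = 4*z*w"
  have "x^2 + y^2 + 1 = (5*w)^2 * z^2 + 1" unfolding x_def y_def by (simp add: algebra_simps power2_eq_square)
  moreover have "[(5*w)^2 * z^2 + 1 = 1^2 * z^2 + 1] (mod p)" using w by (intro cong_add cong_mult cong_pow) auto
  ultimately have root: "p dvd x^2 + y^2 + 1" using z by (simp add: cong_dvd_iff)
  have "\<not> p dvd z"
  proof
    assume "p dvd z"
    then have "p dvd z^2" by (simp add: power2_eq_square)
    then have "p dvd 1" using z by (simp add: dvd_add_right_iff)
    then show False using p(1) not_prime_unit by blast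
  qed
  moreover have "\<not> p dvd w"
  proof
    assume "p dvd w"
    then have "[5*w = 0] (mod p)" by (simp add: cong_0_iff)
    then have "p dvd 1" using w cong_sym cong_trans cong_0_iff by blast
    then show False using p(1) not_prime_unit by blast
  qed
  ultimately have "\<not> p dvd x" "\<not> p dvd y"
    using \<open>\<not> p dvd 3\<close> \<open>\<not> p dvd 4\<close> p(1) unfolding x_def y_def by (simp_all add: prime_dvd_mult_iff)
  moreover from \<open>\<not> p dvd y\<close> have "coprime y p" using p(1) by (simp add: prime_imp_coprime coprime_commute)
  ultimately show ?thesis unfolding has_strong_root_def using root by blast
qed

lemma has_strong_root_prime:
  fixes p :: int
  assumes p: "prime p" "p \<noteq> 2" "p \<noteq> 5"
  shows "has_strong_root p"
proof (cases "p = 3")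
  case True
  then show ?thesis unfolding has_strong_root_def by (intro exI[of _ 1]) simp
next
  case False
  have "p \<noteq> 4"
  proof
    assume "p = 4"
    then have "2 = p" using p(1) by (intro primes_dvd_imp_eq) simp_all
    then show False using \<open>p = 4\<close> by simp
  qed
  then have "p > 5" using p prime_ge_2_int[OF p(1)] False by auto
  obtain x y where root: "p dvd x^2 + y^2 + 1" and y: "\<not> p dvd y"
    using prime_dvd_sum_squares_plus_one_coprime[OF p(1)] .
  show ?thesis
  proof (cases "p dvd x")
    case True
    then have "p dvd x^2" by (simp add: power2_eq_square)
    then have "p dvd y^2 + 1" using root by (simp add: dvd_add_right_iff add.assoc)
    then show ?thesis using has_strong_root_prime_if_sqrt_minus_one[OF p(1) \<open>p > 5\<close>] by blast
  next
    case False
    moreover from y have "coprime y p" using p(1) by (simp add: prime_imp_coprime coprime_commute)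
    ultimately show ?thesis unfolding has_strong_root_def using root by blast
  qed
qed

lemma root_cong:
  fixes m x y x' y' :: int
  assumes "[x = x'] (mod m)" "[y = y'] (mod m)"
  shows "m dvd x^2 + y^2 + 1 \<longleftrightarrow> m dvd x'^2 + y'^2 + 1"
  using assms by (intro cong_dvd_iff cong_add cong_pow) auto

lemma root_lift:
  fixes p m x y :: int
  assumes p: "prime p" "p \<noteq> 2" "p dvd m" and root: "m dvd x^2 + y^2 + 1" and y: "coprime y p"
  obtains t where "p * m dvd x^2 + (y + m*t)^2 + 1"
proof -
  obtain r where r: "x^2 + y^2 + 1 = m * r" using root ..
  have "\<not> p dvd 2" using p(1,2) by (simp add: prime_dvd_two_iff)
  then have "coprime p 2" using p(1) by (intro prime_imp_coprime)
  then have "coprime (2*y) p" using y by (simp add: coprime_commute)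
  then obtain u where u: "[2*y*u = 1] (mod p)" using cong_solve_coprime_int by blast
  define t where "t = - r*u"
  have "x^2 + (y + m*t)^2 + 1 = m * (r * (1 - 2*y*u) + m*t^2)"
    using r unfolding t_def by (simp add: algebra_simps power2_eq_square)
  moreover have "p dvd r * (1 - 2*y*u)"
    using u by (simp add: cong_iff_dvd_diff dvd_diff_commute)
  then have "p dvd r * (1 - 2*y*u) + m*t^2" using p(3) by simp
  ultimately show thesis using that[of t] by (simp add: mult.commute)
qed

lemma has_strong_root_prime_mult:
  fixes p m :: int
  assumes p: "prime p" "p \<noteq> 2" "p dvd m" and m: "has_root m"
  shows "has_strong_root (p * m)"
proof -
  obtain x y where root: "m dvd x^2 + y^2 + 1" and y: "coprime y m"
    using m unfolding has_root_def by blast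
  have "m \<noteq> 0"
  proof
    assume "m = 0"
    then have "x^2 + y^2 + 1 = 0" using root by simp
    then show False using zero_le_power2[of x] zero_le_power2[of y] by linarith
  qed
  define X where "X = (if p * m dvd x then x + m else x)"
  have "\<not> p * m dvd X"
  proof
    assume X: "p * m dvd X"
    show False
    proof (cases "p * m dvd x")
      case True
      then have "p * m dvd 1 * m" using X unfolding X_def by (simp add: dvd_add_right_iff)
      then show False using p(1) \<open>m \<noteq> 0\<close> by (simp add: not_prime_unit del: mult_1)
    next
      case False
      then show False using X unfolding X_def by simp
    qed
  qed
  moreover have "[X = x] (mod m)" unfolding X_def by (simp add: cong_iff_dvd_diff)
  then have "m dvd X^2 + y^2 + 1" using root root_cong[of X x m y y] by simp
  moreover have "coprime y p" using y p(3) by (auto elim!: dvdE)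
  ultimately obtain t where "p * m dvd X^2 + (y + m*t)^2 + 1"
    using root_lift[OF p] by blast
  moreover have "[y = y + m*t] (mod m)" "[y = y + m*t] (mod p)"
    using p(3) by (simp_all add: cong_iff_dvd_diff)
  then have "coprime (y + m*t) p" "coprime (y + m*t) m"
    using cong_imp_coprime y \<open>coprime y p\<close> by blast+
  then have "coprime (y + m*t) (p * m)" by simp
  ultimately show ?thesis
    unfolding has_strong_root_def using \<open>\<not> p * m dvd X\<close> by blast
qed

lemma root_crt:
  fixes m k :: int
  assumes mk: "coprime m k"
    and m: "m dvd x1^2 + y1^2 + 1" "coprime y1 m" and k: "k dvd x2^2 + y2^2 + 1" "coprime y2 k"
  obtains x y where "m * k dvd x^2 + y^2 + 1" "coprime y (m * k)" "[x = x1] (mod m)"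
proof -
  obtain x where x: "[x = x1] (mod m)" "[x = x2] (mod k)" using binary_chinese_remainder_int[OF mk] by blast
  obtain y where y: "[y = y1] (mod m)" "[y = y2] (mod k)" using binary_chinese_remainder_int[OF mk] by blast
  have "m dvd x^2 + y^2 + 1" "k dvd x^2 + y^2 + 1"
    using root_cong[OF x(1) y(1)] root_cong[OF x(2) y(2)] m(1) k(1) by simp_all
  then have "m * k dvd x^2 + y^2 + 1" using mk by (rule divides_mult)
  moreover have "coprime y m" "coprime y k"
    using cong_imp_coprime[OF cong_sym[OF y(1)] m(2)] cong_imp_coprime[OF cong_sym[OF y(2)] k(2)] .
  then have "coprime y (m * k)" by simp
  ultimately show thesis using x(1) by (rule that)
qed

lemma has_root_mult: "coprime m k \<Longrightarrow> has_root m \<Longrightarrow> has_root k \<Longrightarrow> has_root (m * k)"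
  unfolding has_root_def by (metis root_crt)

lemma has_strong_root_mult:
  assumes mk: "coprime m k" and m: "has_strong_root m" and k: "has_root k"
  shows "has_strong_root (m * k)"
proof -
  obtain x1 y1 where m: "m dvd x1^2 + y1^2 + 1" "coprime y1 m" "\<not> m dvd x1"
    using m unfolding has_strong_root_def by blast
  obtain x2 y2 where k: "k dvd x2^2 + y2^2 + 1" "coprime y2 k"
    using k unfolding has_root_def by blast
  obtain x y where root: "m * k dvd x^2 + y^2 + 1" "coprime y (m * k)" and x: "[x = x1] (mod m)"
    using root_crt[OF mk m(1,2) k] .
  have "\<not> m dvd x" using x m(3) by (simp add: cong_dvd_iff)
  then have "\<not> m * k dvd x" using dvd_mult_left by blast
  then show ?thesis unfolding has_strong_root_def using root by blast
qed

lemma has_root_if_not_four_dvd: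
  fixes n :: int
  assumes "n > 0" "\<not> 4 dvd n"
  shows "has_root n"
  using assms
proof (induction n rule: prime_divisors_induct)
  case (unit n)
  then show ?case unfolding has_root_def by (auto simp: zdvd1_eq)
next
  case (factor p m)
  have "m > 0" "\<not> 4 dvd m" using factor.prems prime_gt_0_int[OF factor.hyps]
    by (auto simp: zero_less_mult_iff dvd_mult)
  then have m: "has_root m" by (rule factor.IH)
  show ?case
  proof (cases "p dvd m")
    case True
    then have "p \<noteq> 2" using factor.prems(2) by (auto elim!: dvdE)
    then show ?thesis using has_strong_root_prime_mult[OF factor.hyps _ True m] has_strong_root_imp_has_root by blast
  next
    case False
    then have "coprime m p" using prime_imp_coprime[OF factor.hyps] by (simp add: coprime_commute)
    then show ?thesis using has_root_mult m has_root_prime[OF factor.hyps] by (metis mult.commute)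
  qed
qed simp

lemma has_strong_root_if_not_four_dvd:
  fixes n :: int
  assumes "n > 0" "\<not> 4 dvd n" "n \<notin> {1, 2, 5, 10}"
  shows "has_strong_root n"
  using assms
proof (induction n rule: prime_divisors_induct)
  case (factor p m)
  have "m > 0" "\<not> 4 dvd m" using factor.prems prime_gt_0_int[OF factor.hyps]
    by (auto simp: zero_less_mult_iff dvd_mult)
  then have m: "has_root m" by (rule has_root_if_not_four_dvd)
  show ?case
  proof (cases "p dvd m")
    case True
    then have "p \<noteq> 2" using factor.prems(2) by (auto elim!: dvdE)
    then show ?thesis using has_strong_root_prime_mult[OF factor.hyps _ True m] by blast
  next
    case False
    then have coprime: "coprime p m" using prime_imp_coprime[OF factor.hyps] by blast
    show ?thesis
    proof (cases "m \<in> {1, 2, 5, 10}")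
      case True
      then have "p \<noteq> 2 \<and> p \<noteq> 5" using False factor.prems(3) by (elim insertE emptyE) auto
      then show ?thesis using has_strong_root_mult[OF coprime _ m] has_strong_root_prime[OF factor.hyps] by blast
    next
      case False
      then have "has_strong_root m" using factor.IH \<open>m > 0\<close> \<open>\<not> 4 dvd m\<close> by blast
      then have "has_strong_root (m * p)"
        using coprime has_root_prime[OF factor.hyps] by (simp add: has_strong_root_mult coprime_commute)
      then show ?thesis by (simp only: mult.commute)
    qed
  qed
qed (auto simp: zdvd1_eq)

lemma sum_four_squares_if_has_strong_root:
  fixes n :: int
  assumes "n > 1" and "has_strong_root n"
  shows "\<exists>a b c d. n = a^2 + b^2 + c^2 + d^2 \<and> gcd (gcd a b) (gcd c d) = 1
           \<and> length (filter (\<lambda>z. z = 0) [a, b, c, d]) \<le> 1"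
proof -
  obtain x y where root: "n dvd x^2 + y^2 + 1" and y: "coprime y n" and x: "\<not> n dvd x"
    using assms(2) unfolding has_strong_root_def by blast
  have "n > 0" using assms(1) by simp
  then obtain v where v: "v \<in> quat_lattice n x y" and norm: "quat_norm v = n"
    using root by (rule quat_lattice_contains_norm)
  obtain a b c d where abcd: "v = (a, b, c, d)" by (cases v)
  have "n = a^2 + b^2 + c^2 + d^2" using norm unfolding abcd by simp
  moreover have "gcd (gcd a b) (gcd c d) = 1"
    using quat_lattice_norm_eq_coprime[OF \<open>n > 0\<close> root] v norm unfolding abcd .
  moreover have "length (filter (\<lambda>z. z = 0) [a, b, c, d]) \<le> 1"
    using quat_lattice_norm_eq_at_most_one_zero[OF assms(1) root y x] v norm unfolding abcd .
  ultimately show ?thesis by (intro exI[of _ a] exI[of _ b] exI[of _ c] exI[of _ d]) simp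
qed

theorem corollary2p16:
  fixes n :: int
  assumes "n \<ge> 3" and "n \<noteq> 5" and "\<not> (4 dvd n)"
  shows "\<exists>a b c d :: int. n = a^2 + b^2 + c^2 + d^2
           \<and> gcd (gcd a b) (gcd c d) = 1
           \<and> length (filter (\<lambda>x. x = 0) [a, b, c, d]) \<le> 1"
proof (cases "n = 10")
  case True
  then show ?thesis by (intro exI[of _ 2] exI[of _ 2] exI[of _ 1] exI[of _ 1]) simp
next
  case False
  then have "has_strong_root n" using assms by (intro has_strong_root_if_not_four_dvd) auto
  then show ?thesis using assms(1) by (intro sum_four_squares_if_has_strong_root) simp_all
qed

end
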